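(* Let $\alpha\in(0,2)$, $(\alpha_n)\subset(0,2)$ with $\alpha_n\to\alpha$, $w$ a probability density on $[0,1]$ continuous on $[0,1)$, and $\{\tau_n\}$ a $w$-pre-chaotic sequence. Let $\tilde z\sim\tau_n$ and $x=(x_1,\dots,x_n)=T_n(\tilde z)$ (so $x_1<\dots<x_n$), set $x_0=0$, and define the random function $\psi_n:[0,1]\to[0,\infty)$ by $\psi_n(\xi)=x_{k-1}$ for $\frac{k-1}{n}\le\xi<\frac kn$, $1\le k\le n$. Let $\rho_n$ be the push-forward of Lebesgue measure on $[0,1]$ under $\psi_n$ and $\mu_n=\frac1n\sum_j\delta_{x_j}$. Then $$\lim_{n\to\infty}\frac1n\mathbb{E}[x_n]=0,$$ and for all $\delta>0$, $\lim_{n\to\infty}\mathbb{P}\{W_1(\mu_n,\rho_n)>\delta\}=0$.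
   Context: $S_1^{(n)}=\{\tilde z\in[0,\infty)^n:\sum_j\tilde z_j=1\}$. $\{\tau_n\}$ (probability measures on $S_1^{(n)}$) is $w$-pre-chaotic if, writing $n\mathbb{E}_{\tau_n}[\tilde z_j]=w(j/n)+r_n(j)$, for each $0<\xi_*<1$ there is $C$ depending only on $\xi_*$ such that for each $\epsilon>0$ there is $n_\epsilon$ with, for all $n>n_\epsilon$ and $j,k<n\xi_*$: $|r_n(j)|<\epsilon$, $\mathrm{Var}[\tilde z_j]\le C\epsilon/n$, $|\mathrm{Cov}(\tilde z_j,\tilde z_k)|\le C\epsilon/n^2$. $T_n(\tilde z)_j=n(1-\frac{\alpha_n}2)\sum_{i=1}^j\frac{\tilde z_i}{n+1-i}+\frac{j-1}{n-1}\alpha_n$. $W_1$ is the Kantorovich–Rubinstein distance $\sup\{|\int\chi d\mu-\int\chi d\nu|:\chi\ 1\text{-Lipschitz}\}$. *)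

theory Defs
  imports "HOL-Probability.Probability"
begin

definition simplex1 :: "nat \<Rightarrow> (nat \<Rightarrow> real) set" where
  "simplex1 n = {z. (\<forall>j\<in>{1..n}. 0 \<le> z j) \<and> (\<Sum>j=1..n. z j) = 1}"

definition expect :: "'a measure \<Rightarrow> ('a \<Rightarrow> real) \<Rightarrow> real" where
  "expect M X = integral\<^sup>L M X"

definition covar :: "'a measure \<Rightarrow> ('a \<Rightarrow> real) \<Rightarrow> ('a \<Rightarrow> real) \<Rightarrow> real" where
  "covar M X Y = integral\<^sup>L M (\<lambda>z. (X z - expect M X) * (Y z - expect M Y))"

definition var :: "'a measure \<Rightarrow> ('a \<Rightarrow> real) \<Rightarrow> real" where
  "var M X = integral\<^sup>L M (\<lambda>z. (X z - expect M X)\<^sup>2)"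

definition pre_chaotic :: "(real \<Rightarrow> real) \<Rightarrow> (nat \<Rightarrow> (nat \<Rightarrow> real) measure) \<Rightarrow> bool" where
  "pre_chaotic w \<tau> \<longleftrightarrow>
     (\<forall>\<xi>. 0 < \<xi> \<and> \<xi> < 1 \<longrightarrow>
       (\<exists>C::real. \<forall>\<epsilon>>0. \<exists>N. \<forall>n>N. \<forall>j k.
          1 \<le> j \<longrightarrow> 1 \<le> k \<longrightarrow> real j < real n * \<xi> \<longrightarrow> real k < real n * \<xi> \<longrightarrow>
          \<bar>real n * expect (\<tau> n) (\<lambda>z. z j) - w (real j / real n)\<bar> < \<epsilon> \<and>
          var (\<tau> n) (\<lambda>z. z j) \<le> C * \<epsilon> / real n \<and>
          (j \<noteq> k \<longrightarrow> \<bar>covar (\<tau> n) (\<lambda>z. z j) (\<lambda>z. z k)\<bar> \<le> C * \<epsilon> / (real n)\<^sup>2)))"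

definition Tmap :: "nat \<Rightarrow> real \<Rightarrow> (nat \<Rightarrow> real) \<Rightarrow> nat \<Rightarrow> real" where
  "Tmap n a z j = real n * (1 - a / 2) * (\<Sum>i=1..j. z i / (real n + 1 - real i))
                  + (real j - 1) / (real n - 1) * a"

definition xpt :: "nat \<Rightarrow> real \<Rightarrow> (nat \<Rightarrow> real) \<Rightarrow> nat \<Rightarrow> real" where
  "xpt n a z j = (if j = 0 then 0 else Tmap n a z j)"

text \<open>psi_n(xi) = x_{k-1} for (k-1)/n \<le> xi < k/n (value at xi = 1 irrelevant, null set).\<close>
definition psi :: "nat \<Rightarrow> real \<Rightarrow> (nat \<Rightarrow> real) \<Rightarrow> real \<Rightarrow> real" where
  "psi n a z \<xi> = xpt n a z (nat \<lfloor>real n * \<xi>\<rfloor>)"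

definition rho :: "nat \<Rightarrow> real \<Rightarrow> (nat \<Rightarrow> real) \<Rightarrow> real measure" where
  "rho n a z = distr (restrict_space lborel {0..1}) borel (psi n a z)"

definition mu_emp :: "nat \<Rightarrow> real \<Rightarrow> (nat \<Rightarrow> real) \<Rightarrow> real measure" where
  "mu_emp n a z = measure_pmf (map_pmf (xpt n a z) (pmf_of_set {1..n}))"

text \<open>Kantorovich--Rubinstein distance\<close>
definition W1 :: "real measure \<Rightarrow> real measure \<Rightarrow> ereal" where
  "W1 M N = (SUP g\<in>{g::real\<Rightarrow>real. lipschitz_on 1 UNIV g}.
               ereal \<bar>integral\<^sup>L M g - integral\<^sup>L N g\<bar>)"

end

theory Submission
  imports Defs
begin

(* On the cell [(k-1)/n, k/n) the function psi_n equals x_(k-1), so rho_n is the uniform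
   distribution on x_0, ..., x_(n-1) while mu_n is the uniform distribution on x_1, ..., x_n.
   Against a 1-Lipschitz test function the two integrals telescope to (g x_n - g 0) / n, hence
   W1(mu_n, rho_n) <= x_n / n, and the probability statement follows from the first one by
   Markov's inequality.

   For the first statement, x_n / n = (1 - a/2) Tsum n z + a / n, where Tsum n z is the sum of
   z_i / (n + 1 - i). The weights with i < n xi are below 1 / (n (1 - xi)) and all weights are
   at most 1, so Tsum n z <= 1 / (n (1 - xi)) + (1 - sum_(i < n xi) z_i). Pre-chaoticity makes
   the expected mass of the coordinates below n xi a Riemann sum of w over [0, xi], which is
   close to 1 once xi is close to 1. *)

lemma indicator_mult_step_function:
  fixes h :: "nat \<Rightarrow> real"
  assumes "0 < n" "x \<noteq> 1"
  shows "indicator {0..1} x * h (nat \<lfloor>real n * x\<rfloor>)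
    = (\<Sum>k<n. h k * indicator {real k / real n..<(real k + 1) / real n} x)"
proof (cases "0 \<le> x \<and> x < 1")
  case True
  define k0 where "k0 = nat \<lfloor>real n * x\<rfloor>"
  have cell_iff: "x \<in> {real k / real n..<(real k + 1) / real n} \<longleftrightarrow> k = k0" for k
  proof -
    have "x \<in> {real k / real n..<(real k + 1) / real n} \<longleftrightarrow> \<lfloor>real n * x\<rfloor> = int k"
      using assms by (simp add: floor_eq_iff field_simps)
    then show ?thesis using True by (auto simp: k0_def)
  qed
  have "k0 < n"
    using True assms by (simp add: k0_def nat_less_iff floor_less_iff)
  have "(\<Sum>k<n. h k * indicator {real k / real n..<(real k + 1) / real n} x)
      = (\<Sum>k<n. if k = k0 then h k0 else 0)"
    by (intro sum.cong) (simp_all only: indicator_def cell_iff, auto)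
  then show ?thesis
    using True \<open>k0 < n\<close> by (simp add: k0_def)
next
  case False
  have "x \<notin> {real k / real n..<(real k + 1) / real n}" if "k < n" for k
  proof -
    have "0 \<le> real k / real n" "(real k + 1) / real n \<le> 1"
      using that assms by (simp_all add: field_simps)
    then show ?thesis using False by (smt (verit) atLeastLessThan_iff)
  qed
  then have "(\<Sum>k<n. h k * indicator {real k / real n..<(real k + 1) / real n} x) = 0"
    by (intro sum.neutral) simp
  moreover have "indicator {0..1} x = (0::real)"
    using False assms by auto
  ultimately show ?thesis by simp
qed

lemma integral_distr_step_function:
  fixes f :: "nat \<Rightarrow> real" and g :: "real \<Rightarrow> real"
  assumes n: "0 < n" and g[measurable]: "g \<in> borel_measurable borel"
  shows "integral\<^sup>L (distr (restrict_space lborel {0..1}) borel (\<lambda>\<xi>. f (nat \<lfloor>real n * \<xi>\<rfloor>))) g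
    = (\<Sum>k<n. g (f k)) / real n"
proof -
  let ?cell = "\<lambda>k. {real k / real n..<(real k + 1) / real n}"
  have cell_integrable: "integrable lborel (indicat_real (?cell k))" for k
    by (intro integrable_real_indicator) (simp_all add: divide_right_mono)
  have cell_measure: "measure lborel (?cell k) = 1 / real n" for k
    by (simp add: divide_right_mono diff_divide_distrib[symmetric])
  have "integral\<^sup>L (distr (restrict_space lborel {0..1}) borel (\<lambda>\<xi>. f (nat \<lfloor>real n * \<xi>\<rfloor>))) g
      = integral\<^sup>L (restrict_space lborel {0..1}) (\<lambda>\<xi>. g (f (nat \<lfloor>real n * \<xi>\<rfloor>)))"
    by (intro integral_distr measurable_restrict_space1) measurable
  also have "\<dots> = integral\<^sup>L lborel (\<lambda>\<xi>. indicator {0..1} \<xi> * g (f (nat \<lfloor>real n * \<xi>\<rfloor>)))"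
    by (subst integral_restrict_space) auto
  also have "\<dots> = integral\<^sup>L lborel (\<lambda>\<xi>. \<Sum>k<n. g (f k) * indicator (?cell k) \<xi>)"
  proof -
    have "AE \<xi> in lborel. indicator {0..1} \<xi> * g (f (nat \<lfloor>real n * \<xi>\<rfloor>))
        = (\<Sum>k<n. g (f k) * indicator (?cell k) \<xi>)"
      using AE_lborel_singleton[of 1] by eventually_elim (rule indicator_mult_step_function[OF n])
    then show ?thesis by (rule integral_cong_AE[rotated 2]) measurable
  qed
  also have "\<dots> = (\<Sum>k<n. g (f k) * (1 / real n))"
    by (subst Bochner_Integration.integral_sum) (auto simp: cell_measure cell_integrable)
  finally show ?thesis by (simp add: sum_divide_distrib)
qed

lemma W1_uniform_step_function_le:
  fixes f :: "nat \<Rightarrow> real"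
  assumes n: "0 < n"
  shows "W1 (measure_pmf (map_pmf f (pmf_of_set {1..n})))
            (distr (restrict_space lborel {0..1}) borel (\<lambda>\<xi>. f (nat \<lfloor>real n * \<xi>\<rfloor>)))
    \<le> ereal (\<bar>f n - f 0\<bar> / real n)"
  unfolding W1_def
proof (rule SUP_least)
  fix g :: "real \<Rightarrow> real"
  assume "g \<in> {g. lipschitz_on 1 UNIV g}"
  then have lip: "lipschitz_on 1 UNIV g" by simp
  then have [measurable]: "g \<in> borel_measurable borel"
    by (intro borel_measurable_continuous_onI lipschitz_on_continuous_on)
  have "integral\<^sup>L (measure_pmf (map_pmf f (pmf_of_set {1..n}))) g = (\<Sum>k<n. g (f (Suc k))) / real n"
    using n by (simp add: integral_pmf_of_set sum.atLeast1_atMost_eq)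
  moreover have "integral\<^sup>L (distr (restrict_space lborel {0..1}) borel (\<lambda>\<xi>. f (nat \<lfloor>real n * \<xi>\<rfloor>))) g
      = (\<Sum>k<n. g (f k)) / real n"
    by (rule integral_distr_step_function[OF n]) measurable
  moreover have "(\<Sum>k<n. g (f (Suc k))) - (\<Sum>k<n. g (f k)) = g (f n) - g (f 0)"
    using sum_lessThan_telescope[of "\<lambda>k. g (f k)" n] by (simp add: sum_subtractf)
  moreover have "\<bar>g (f n) - g (f 0)\<bar> \<le> \<bar>f n - f 0\<bar>"
    using lipschitz_onD[OF lip, of "f n" "f 0"] by (simp add: dist_real_def)
  ultimately show "ereal \<bar>integral\<^sup>L (measure_pmf (map_pmf f (pmf_of_set {1..n}))) g
      - integral\<^sup>L (distr (restrict_space lborel {0..1}) borel (\<lambda>\<xi>. f (nat \<lfloor>real n * \<xi>\<rfloor>))) g\<bar>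
    \<le> ereal (\<bar>f n - f 0\<bar> / real n)"
    using n by (simp add: diff_divide_distrib[symmetric] divide_right_mono)
qed

lemma W1_mu_emp_rho_le:
  assumes "0 < n"
  shows "W1 (mu_emp n a z) (rho n a z) \<le> ereal (\<bar>xpt n a z n\<bar> / real n)"
proof -
  have "psi n a z = (\<lambda>\<xi>. xpt n a z (nat \<lfloor>real n * \<xi>\<rfloor>))"
    by (simp add: psi_def fun_eq_iff)
  then show ?thesis
    using W1_uniform_step_function_le[OF assms, of "xpt n a z"]
    by (simp add: mu_emp_def rho_def xpt_def[of _ _ _ 0])
qed

definition Tsum :: "nat \<Rightarrow> (nat \<Rightarrow> real) \<Rightarrow> real" where
  "Tsum n z = (\<Sum>i=1..n. z i / (real n + 1 - real i))"

lemma xpt_last_eq: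
  assumes "2 \<le> n"
  shows "xpt n a z n = real n * (1 - a / 2) * Tsum n z + a"
  using assms by (simp add: xpt_def Tmap_def Tsum_def)

lemma simplex1_nonneg: "z \<in> simplex1 n \<Longrightarrow> j \<in> {1..n} \<Longrightarrow> 0 \<le> z j"
  by (simp add: simplex1_def)

lemma simplex1_le_1:
  assumes "z \<in> simplex1 n" "j \<in> {1..n}"
  shows "z j \<le> 1"
proof -
  have "z j \<le> (\<Sum>i=1..n. z i)"
    using assms by (intro member_le_sum) (auto simp: simplex1_def)
  then show ?thesis using assms by (simp add: simplex1_def)
qed

lemma Tsum_nonneg: "z \<in> simplex1 n \<Longrightarrow> 0 \<le> Tsum n z"
  unfolding Tsum_def by (intro sum_nonneg divide_nonneg_pos) (auto simp: simplex1_nonneg)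

lemma Tsum_le:
  assumes z: "z \<in> simplex1 n" and "m \<le> n"
  shows "Tsum n z \<le> 1 / (real n + 1 - real m) + (1 - (\<Sum>j=1..m. z j))"
proof -
  have z0: "0 \<le> z i" if "i \<in> {1..n}" for i
    using simplex1_nonneg[OF z that] .
  have split: "(\<Sum>i=1..n. f i) = (\<Sum>i=1..m. f i) + (\<Sum>i\<in>{m<..n}. f i)" for f :: "nat \<Rightarrow> real"
  proof -
    have "{1..n} = {1..m} \<union> {m<..n}" "{1..m} \<inter> {m<..n} = {}" using \<open>m \<le> n\<close> by auto
    then show ?thesis by (metis sum.union_disjoint finite_atLeastAtMost finite_greaterThanAtMost)
  qed
  have "(\<Sum>i=1..m. z i / (real n + 1 - real i)) \<le> (\<Sum>i=1..m. z i / (real n + 1 - real m))"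
    using \<open>m \<le> n\<close> z0 by (intro sum_mono divide_left_mono) auto
  also have "\<dots> = (\<Sum>i=1..m. z i) / (real n + 1 - real m)"
    by (simp add: sum_divide_distrib)
  also have "\<dots> \<le> 1 / (real n + 1 - real m)"
  proof -
    have "(\<Sum>i=1..m. z i) \<le> (\<Sum>i=1..n. z i)"
      using \<open>m \<le> n\<close> z0 by (intro sum_mono2) auto
    then show ?thesis using z \<open>m \<le> n\<close> by (simp add: simplex1_def divide_right_mono)
  qed
  finally have head: "(\<Sum>i=1..m. z i / (real n + 1 - real i)) \<le> 1 / (real n + 1 - real m)" .
  have tail: "(\<Sum>i\<in>{m<..n}. z i / (real n + 1 - real i)) \<le> (\<Sum>i\<in>{m<..n}. z i)"
  proof (rule sum_mono)
    fix i assume "i \<in> {m<..n}"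
    then show "z i / (real n + 1 - real i) \<le> z i"
      using z0 divide_left_mono[of 1 "real n + 1 - real i" "z i"] by auto
  qed
  have "(\<Sum>i=1..m. z i) + (\<Sum>i\<in>{m<..n}. z i) = 1"
    using z split[of z] by (simp only: simplex1_def mem_Collect_eq)
  then show ?thesis
    using head tail split[of "\<lambda>i. z i / (real n + 1 - real i)"] unfolding Tsum_def by linarith
qed

context
  fixes M :: "(nat \<Rightarrow> real) measure" and n :: nat
  assumes prob: "prob_space M"
    and sets_M: "sets M = sets (PiM {1..n} (\<lambda>_. borel))"
    and AE_simplex: "AE z in M. z \<in> simplex1 n"
begin

lemma integrable_coordinate:
  assumes j: "j \<in> {1..n}"
  shows "integrable M (\<lambda>z. z j)"
proof -
  interpret prob_space M by (rule prob)
  have "(\<lambda>z. z j) \<in> borel_measurable M"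
    using j by (simp add: measurable_cong_sets[OF sets_M refl] measurable_component_singleton)
  moreover have "AE z in M. norm (z j) \<le> 1"
    using AE_simplex by eventually_elim (use j simplex1_nonneg simplex1_le_1 in auto)
  ultimately show ?thesis by (rule integrable_const_bound[rotated])
qed

lemma integrable_Tsum: "integrable M (Tsum n)"
  unfolding Tsum_def[abs_def]
  by (intro Bochner_Integration.integrable_sum integrable_divide integrable_coordinate)

lemma expect_Tsum_nonneg: "0 \<le> expect M (Tsum n)"
  unfolding expect_def by (rule integral_nonneg_AE) (use AE_simplex Tsum_nonneg in auto)

lemma expect_Tsum_le:
  assumes "m \<le> n"
  shows "expect M (Tsum n) \<le> 1 / (real n + 1 - real m) + (1 - (\<Sum>j=1..m. expect M (\<lambda>z. z j)))"
proof -
  interpret prob_space M by (rule prob)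
  have int_head: "integrable M (\<lambda>z. \<Sum>j=1..m. z j)"
    using assms by (intro Bochner_Integration.integrable_sum integrable_coordinate) auto
  have int_bound: "integrable M (\<lambda>z. 1 / (real n + 1 - real m) + (1 - (\<Sum>j=1..m. z j)))"
    by (intro Bochner_Integration.integrable_add Bochner_Integration.integrable_diff
        integrable_const int_head)
  have "expect M (Tsum n)
      \<le> integral\<^sup>L M (\<lambda>z. 1 / (real n + 1 - real m) + (1 - (\<Sum>j=1..m. z j)))"
  proof -
    have "AE z in M. Tsum n z \<le> 1 / (real n + 1 - real m) + (1 - (\<Sum>j=1..m. z j))"
      using AE_simplex by eventually_elim (rule Tsum_le[OF _ assms])
    then show ?thesis unfolding expect_def by (intro integral_mono_AE integrable_Tsum int_bound)
  qed
  also have "\<dots> = 1 / (real n + 1 - real m) + (1 - (\<Sum>j=1..m. expect M (\<lambda>z. z j)))"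
  proof -
    have "integral\<^sup>L M (\<lambda>z. \<Sum>j=1..m. z j) = (\<Sum>j=1..m. integral\<^sup>L M (\<lambda>z. z j))"
      by (rule Bochner_Integration.integral_sum) (use assms integrable_coordinate in auto)
    then show ?thesis
      by (simp add: expect_def int_head[simplified] prob_space Bochner_Integration.integral_add
          Bochner_Integration.integral_diff)
  qed
  finally show ?thesis .
qed

lemma integrable_xpt_last:
  assumes "2 \<le> n"
  shows "integrable M (\<lambda>z. xpt n a z n)"
proof -
  interpret prob_space M by (rule prob)
  show ?thesis
    using integrable_Tsum by (simp add: xpt_last_eq[OF assms])
qed

lemma expect_xpt_last:
  assumes "2 \<le> n"
  shows "expect M (\<lambda>z. xpt n a z n) / real n = (1 - a / 2) * expect M (Tsum n) + a / real n"
proof -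
  interpret prob_space M by (rule prob)
  have "expect M (\<lambda>z. xpt n a z n) = real n * (1 - a / 2) * expect M (Tsum n) + a"
    using integrable_Tsum by (simp add: xpt_last_eq[OF assms] expect_def prob_space)
  then show ?thesis
    using assms by (simp add: field_simps)
qed

lemma measure_W1_gt_le:
  assumes n: "2 \<le> n" and a: "0 \<le> a" "a \<le> 2" and \<delta>: "0 < \<delta>"
  shows "measure M {z \<in> space M. W1 (mu_emp n a z) (rho n a z) > ereal \<delta>}
    \<le> expect M (\<lambda>z. xpt n a z n) / real n / \<delta>"
proof -
  interpret prob_space M by (rule prob)
  let ?X = "\<lambda>z. xpt n a z n"
  have int_X: "integrable M ?X"
    by (rule integrable_xpt_last[OF n])
  have X_nonneg: "AE z in M. 0 \<le> ?X z"
    using AE_simplex by eventually_elim (use Tsum_nonneg a in \<open>simp add: xpt_last_eq[OF n]\<close>)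
  have "AE z in M. W1 (mu_emp n a z) (rho n a z) > ereal \<delta> \<longrightarrow> real n * \<delta> \<le> ?X z"
    using X_nonneg
  proof eventually_elim
    case (elim z)
    have W1_le: "W1 (mu_emp n a z) (rho n a z) \<le> ereal (?X z / real n)"
      using W1_mu_emp_rho_le[of n a z] n elim by simp
    show ?case
    proof
      assume "W1 (mu_emp n a z) (rho n a z) > ereal \<delta>"
      then have "ereal \<delta> < ereal (?X z / real n)"
        using W1_le by (rule order.strict_trans2)
      then show "real n * \<delta> \<le> ?X z"
        using n by (simp add: field_simps)
    qed
  qed
  then have "measure M {z \<in> space M. W1 (mu_emp n a z) (rho n a z) > ereal \<delta>}
      \<le> measure M {z \<in> space M. real n * \<delta> \<le> ?X z}"
    using borel_measurable_integrable[OF int_X]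
    by (intro finite_measure_mono_AE) (auto elim!: AE_mp)
  also have "\<dots> \<le> expect M ?X / (real n * \<delta>)"
    unfolding expect_def using n \<delta>
    by (intro integral_Markov_inequality_measure[OF int_X _ X_nonneg, of "space M"]) auto
  finally show ?thesis
    by (simp add: divide_divide_eq_left)
qed

end

lemma integral_le_right_Riemann_sum:
  fixes w :: "real \<Rightarrow> real"
  assumes n: "0 < n"
  shows "w integrable_on {0..real m / real n} \<Longrightarrow>
    (\<And>k t. k < m \<Longrightarrow> t \<in> {real k / real n..(real k + 1) / real n} \<Longrightarrow>
      w t \<le> w ((real k + 1) / real n) + \<eta>) \<Longrightarrow>
    integral {0..real m / real n} w \<le> (\<Sum>k<m. w ((real k + 1) / real n) + \<eta>) / real n"
proof (induction m)
  case 0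
  then show ?case by simp
next
  case (Suc m)
  let ?a = "real m / real n" and ?b = "(real m + 1) / real n"
  have ab: "?a \<le> ?b" by (simp add: divide_right_mono)
  have int_Suc: "w integrable_on {0..?b}"
    using Suc.prems(1) by (simp add: add.commute)
  have "integral {0..?a} w \<le> (\<Sum>k<m. w ((real k + 1) / real n) + \<eta>) / real n"
    using Suc.prems(2) ab by (intro Suc.IH integrable_on_subinterval[OF int_Suc]) auto
  moreover have "integral {?a..?b} w \<le> integral {?a..?b} (\<lambda>_. w ?b + \<eta>)"
    using Suc.prems(2)[of m] ab by (intro integral_le integrable_on_subinterval[OF int_Suc]) auto
  moreover have "integral {?a..?b} (\<lambda>_. w ?b + \<eta>) = (w ?b + \<eta>) / real n"
    using ab n by (simp add: field_simps)
  moreover have "integral {0..?a} w + integral {?a..?b} w = integral {0..?b} w"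
    using ab by (intro Henstock_Kurzweil_Integration.integral_combine int_Suc) auto
  ultimately show ?case
    by (simp add: add.commute add_divide_distrib)
qed

lemma initial_integral_close_to_total:
  fixes w :: "real \<Rightarrow> real"
  assumes w1: "(w has_integral 1) {0..1}" and \<eta>: "0 < \<eta>"
  obtains \<xi>0 where "0 < \<xi>0" "\<xi>0 < 1" "1 - \<eta> < integral {0..\<xi>0} w"
proof -
  have "continuous_on {0..1} (\<lambda>t. integral {0..t} w)"
    using w1 by (intro indefinite_integral_continuous_1) blast
  then obtain d where d: "0 < d"
    "\<forall>t\<in>{0..1}. dist t 1 < d \<longrightarrow> dist (integral {0..t} w) (integral {0..1} w) < \<eta>"
    using \<eta> unfolding continuous_on_iff by (metis atLeastAtMost_iff order_refl zero_le_one)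
  define \<xi>0 where "\<xi>0 = max (1/2) (1 - d/2)"
  have "\<xi>0 \<in> {0..1}" "dist \<xi>0 1 < d"
    using d by (auto simp: \<xi>0_def dist_real_def)
  then have "dist (integral {0..\<xi>0} w) 1 < \<eta>"
    using d(2) integral_unique[OF w1] by auto
  moreover have "0 < \<xi>0" "\<xi>0 < 1"
    using d by (auto simp: \<xi>0_def)
  ultimately show ?thesis
    using that by (auto simp: dist_real_def)
qed

lemma density_Riemann_sum_lower:
  fixes w :: "real \<Rightarrow> real"
  assumes w0: "\<forall>x\<in>{0..1}. 0 \<le> w x" and w1: "(w has_integral 1) {0..1}"
    and w_cont: "continuous_on {0..<1} w" and \<eta>: "0 < \<eta>"
  obtains \<xi>0 \<xi> where "0 < \<xi>0" "\<xi>0 < \<xi>" "\<xi> < 1"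
    "\<forall>\<^sub>F n in sequentially. \<forall>m. \<xi>0 \<le> real m / real n \<longrightarrow> real m / real n \<le> \<xi> \<longrightarrow>
       1 - 2 * \<eta> \<le> (\<Sum>j=1..m. w (real j / real n)) / real n"
proof -
  have w_int: "w integrable_on {0..1}" using w1 by blast
  obtain \<xi>0 where "0 < \<xi>0" "\<xi>0 < 1" and head: "1 - \<eta> < integral {0..\<xi>0} w"
    using initial_integral_close_to_total[OF w1 \<eta>] by blast
  define \<xi> where "\<xi> = (1 + \<xi>0) / 2"
  have \<xi>: "0 < \<xi>0" "\<xi>0 < \<xi>" "\<xi> < 1"
    using \<open>0 < \<xi>0\<close> \<open>\<xi>0 < 1\<close> by (auto simp: \<xi>_def)
  have "uniformly_continuous_on {0..\<xi>} w"
    using \<xi> by (intro compact_uniformly_continuous continuous_on_subset[OF w_cont]) auto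
  then obtain \<gamma> where \<gamma>: "0 < \<gamma>"
    "\<forall>s\<in>{0..\<xi>}. \<forall>t\<in>{0..\<xi>}. dist s t < \<gamma> \<longrightarrow> dist (w s) (w t) < \<eta>"
    using \<eta> unfolding uniformly_continuous_on_def by metis
  have "\<forall>\<^sub>F n in sequentially. 1 / real n < \<gamma>"
    by (rule order_tendstoD(2)[OF lim_1_over_n \<gamma>(1)])
  moreover have "\<forall>\<^sub>F n in sequentially. 0 < n"
    by (rule eventually_gt_at_top)
  ultimately have "\<forall>\<^sub>F n in sequentially. \<forall>m. \<xi>0 \<le> real m / real n \<longrightarrow> real m / real n \<le> \<xi> \<longrightarrow>
       1 - 2 * \<eta> \<le> (\<Sum>j=1..m. w (real j / real n)) / real n"
  proof eventually_elim
    case (elim n)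
    show ?case
    proof (intro allI impI)
      fix m assume m: "\<xi>0 \<le> real m / real n" "real m / real n \<le> \<xi>"
      have "real m / real n \<le> 1"
        using m \<xi> by linarith
      then have "m \<le> n"
        using elim by (simp add: divide_le_eq_1)
      have step_bound: "w t \<le> w ((real k + 1) / real n) + \<eta>"
        if "k < m" "t \<in> {real k / real n..(real k + 1) / real n}" for k t
      proof -
        have "(real k + 1) / real n \<le> real m / real n"
          using that(1) by (simp add: divide_right_mono)
        moreover have "0 \<le> t"
          using that(2) order_trans[OF divide_nonneg_nonneg[of "real k" "real n"]] by auto
        moreover have "dist t ((real k + 1) / real n) \<le> 1 / real n"
          using that(2) elim by (auto simp: dist_real_def field_simps)
        ultimately have "t \<in> {0..\<xi>}" "(real k + 1) / real n \<in> {0..\<xi>}"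
          "dist t ((real k + 1) / real n) < \<gamma>"
          using that(2) m elim by auto
        then have "dist (w t) (w ((real k + 1) / real n)) < \<eta>"
          using \<gamma>(2) by blast
        then show ?thesis by (simp add: dist_real_def)
      qed
      have int_m: "w integrable_on {0..real m / real n}"
        using m \<xi> by (intro integrable_on_subinterval[OF w_int]) auto
      have "integral {0..\<xi>0} w \<le> integral {0..real m / real n} w"
        using m \<xi> w0 by (intro integral_subset_le integrable_on_subinterval[OF w_int] int_m) auto
      also have "\<dots> \<le> (\<Sum>k<m. w ((real k + 1) / real n) + \<eta>) / real n"
        by (rule integral_le_right_Riemann_sum[OF elim(2) int_m step_bound])
      also have "\<dots> = (\<Sum>j=1..m. w (real j / real n)) / real n + \<eta> * (real m / real n)"
        by (simp add: sum.distrib sum.atLeast1_atMost_eq add_divide_distrib add.commute)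
      also have "\<dots> \<le> (\<Sum>j=1..m. w (real j / real n)) / real n + \<eta>"
        using \<open>m \<le> n\<close> \<eta> by (simp add: mult_le_cancel_left1 divide_le_eq)
      finally show "1 - 2 * \<eta> \<le> (\<Sum>j=1..m. w (real j / real n)) / real n"
        using head by linarith
    qed
  qed
  with \<xi> that show ?thesis by blast
qed

lemma pre_chaotic_expect_coordinate:
  assumes "pre_chaotic w \<tau>" "0 < \<xi>" "\<xi> < 1" "0 < \<epsilon>"
  shows "\<forall>\<^sub>F n in sequentially. \<forall>j. 1 \<le> j \<longrightarrow> real j < real n * \<xi> \<longrightarrow>
    \<bar>real n * expect (\<tau> n) (\<lambda>z. z j) - w (real j / real n)\<bar> < \<epsilon>"
proof -
  obtain N where "\<forall>n>N. \<forall>j. 1 \<le> j \<longrightarrow> real j < real n * \<xi> \<longrightarrow>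
      \<bar>real n * expect (\<tau> n) (\<lambda>z. z j) - w (real j / real n)\<bar> < \<epsilon>"
    using assms unfolding pre_chaotic_def by meson
  then show ?thesis
    unfolding eventually_sequentially by (meson Suc_le_lessD)
qed

lemma pre_chaotic_expect_mass_lower:
  fixes w :: "real \<Rightarrow> real"
  assumes w0: "\<forall>x\<in>{0..1}. 0 \<le> w x" and w1: "(w has_integral 1) {0..1}"
    and w_cont: "continuous_on {0..<1} w"
    and pc: "pre_chaotic w \<tau>" and \<eta>: "0 < \<eta>"
  obtains \<xi> where "0 < \<xi>" "\<xi> < 1"
    "\<forall>\<^sub>F n in sequentially. \<exists>m\<le>n. real m < real n * \<xi> \<and>
       1 - 3 * \<eta> \<le> (\<Sum>j=1..m. expect (\<tau> n) (\<lambda>z. z j))"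
proof -
  obtain \<xi>0 \<xi> where \<xi>: "0 < \<xi>0" "\<xi>0 < \<xi>" "\<xi> < 1" and Riemann:
    "\<forall>\<^sub>F n in sequentially. \<forall>m. \<xi>0 \<le> real m / real n \<longrightarrow> real m / real n \<le> \<xi> \<longrightarrow>
       1 - 2 * \<eta> \<le> (\<Sum>j=1..m. w (real j / real n)) / real n"
    using density_Riemann_sum_lower[OF w0 w1 w_cont \<eta>] by blast
  have "0 < \<xi>" using \<xi> by linarith
  have "\<forall>\<^sub>F n in sequentially. 1 / real n < \<xi> - \<xi>0"
    using \<xi> by (intro order_tendstoD(2)[OF lim_1_over_n]) simp
  moreover have "\<forall>\<^sub>F n in sequentially. 0 < n"
    by (rule eventually_gt_at_top)
  moreover note pre_chaotic_expect_coordinate[OF pc \<open>0 < \<xi>\<close> \<xi>(3) \<eta>]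
  ultimately have "\<forall>\<^sub>F n in sequentially. \<exists>m\<le>n. real m < real n * \<xi> \<and>
       1 - 3 * \<eta> \<le> (\<Sum>j=1..m. expect (\<tau> n) (\<lambda>z. z j))"
    using Riemann
  proof eventually_elim
    case (elim n)
    define m where "m = nat \<lceil>real n * \<xi>0\<rceil>"
    have "real n * \<xi>0 \<le> real m" "real m < real n * \<xi>0 + 1"
      using \<xi> elim(2) ceiling_correct[of "real n * \<xi>0"] by (simp_all add: m_def)
    moreover have "1 < real n * (\<xi> - \<xi>0)"
      using elim(1,2) by (simp add: field_simps)
    ultimately have m_lt: "real m < real n * \<xi>" and m_ge: "\<xi>0 \<le> real m / real n"
      using elim(2) by (simp_all add: algebra_simps le_divide_eq)
    have "real n * \<xi> \<le> real n"
      using \<xi>(3) by (intro mult_left_le) auto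
    then have "m \<le> n"
      using m_lt by simp
    have "1 - 2 * \<eta> \<le> (\<Sum>j=1..m. w (real j / real n)) / real n"
      using elim(4) m_ge m_lt elim(2) by (simp add: divide_le_eq mult.commute)
    also have "\<dots> = (\<Sum>j=1..m. (w (real j / real n) - \<eta>) / real n) + \<eta> * (real m / real n)"
      by (simp add: sum_subtractf sum_divide_distrib[symmetric] diff_divide_distrib)
    also have "\<dots> \<le> (\<Sum>j=1..m. expect (\<tau> n) (\<lambda>z. z j)) + \<eta>"
    proof (rule add_mono)
      show "(\<Sum>j=1..m. (w (real j / real n) - \<eta>) / real n) \<le> (\<Sum>j=1..m. expect (\<tau> n) (\<lambda>z. z j))"
      proof (rule sum_mono)
        fix j assume "j \<in> {1..m}"
        then have "\<bar>real n * expect (\<tau> n) (\<lambda>z. z j) - w (real j / real n)\<bar> < \<eta>"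
          using elim(3) m_lt by force
        then show "(w (real j / real n) - \<eta>) / real n \<le> expect (\<tau> n) (\<lambda>z. z j)"
          using elim(2) by (simp add: divide_le_eq mult.commute)
      qed
      show "\<eta> * (real m / real n) \<le> \<eta>"
        using \<open>m \<le> n\<close> \<eta> by (simp add: mult_le_cancel_left1 divide_le_eq)
    qed
    finally show ?case
      using \<open>m \<le> n\<close> m_lt by (intro exI[of _ m]) auto
  qed
  with \<open>0 < \<xi>\<close> \<xi>(3) that show ?thesis by blast
qed

lemma expect_Tsum_tendsto_0:
  fixes w :: "real \<Rightarrow> real" and \<tau> :: "nat \<Rightarrow> (nat \<Rightarrow> real) measure"
  assumes w0: "\<forall>x\<in>{0..1}. 0 \<le> w x" and w1: "(w has_integral 1) {0..1}"
    and w_cont: "continuous_on {0..<1} w"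
    and prob: "\<forall>n\<ge>1. prob_space (\<tau> n)"
    and sets_\<tau>: "\<forall>n\<ge>1. sets (\<tau> n) = sets (PiM {1..n} (\<lambda>_. borel))"
    and AE_simplex: "\<forall>n\<ge>1. AE z in \<tau> n. z \<in> simplex1 n"
    and pc: "pre_chaotic w \<tau>"
  shows "(\<lambda>n. expect (\<tau> n) (Tsum n)) \<longlonglongrightarrow> 0"
  unfolding tendsto_iff
proof (intro allI impI)
  fix e :: real
  assume "0 < e"
  define \<eta> where "\<eta> = e / 4"
  have \<eta>: "0 < \<eta>" using \<open>0 < e\<close> by (simp add: \<eta>_def)
  obtain \<xi> where \<xi>: "0 < \<xi>" "\<xi> < 1" and mass:
    "\<forall>\<^sub>F n in sequentially. \<exists>m\<le>n. real m < real n * \<xi> \<and>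
       1 - 3 * \<eta> \<le> (\<Sum>j=1..m. expect (\<tau> n) (\<lambda>z. z j))"
    using pre_chaotic_expect_mass_lower[OF w0 w1 w_cont pc \<eta>] by blast
  have "\<forall>\<^sub>F n in sequentially. 1 / real n < \<eta> * (1 - \<xi>)"
    using \<eta> \<xi> by (intro order_tendstoD(2)[OF lim_1_over_n]) simp
  moreover have "\<forall>\<^sub>F n in sequentially. 1 \<le> n"
    by (rule eventually_ge_at_top)
  ultimately show "\<forall>\<^sub>F n in sequentially. dist (expect (\<tau> n) (Tsum n)) 0 < e"
    using mass
  proof eventually_elim
    case (elim n)
    then obtain m where "m \<le> n" "real m < real n * \<xi>"
      and mass_n: "1 - 3 * \<eta> \<le> (\<Sum>j=1..m. expect (\<tau> n) (\<lambda>z. z j))"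
      by blast
    note facts_n = prob[rule_format, OF elim(2)] sets_\<tau>[rule_format, OF elim(2)]
      AE_simplex[rule_format, OF elim(2)]
    have "0 < real n * (1 - \<xi>)"
      using \<xi> elim(2) by simp
    moreover have "real n * (1 - \<xi>) < real n + 1 - real m"
      using \<open>real m < real n * \<xi>\<close> by (simp add: algebra_simps)
    ultimately have "1 / (real n + 1 - real m) < 1 / (real n * (1 - \<xi>))"
      by (rule frac_less2[OF zero_less_one order_refl])
    also have "\<dots> < \<eta>"
      using elim(1,2) \<xi> by (simp add: field_simps)
    finally have "expect (\<tau> n) (Tsum n) < 4 * \<eta>"
      using expect_Tsum_le[OF facts_n \<open>m \<le> n\<close>] mass_n by linarith
    then show ?case
      using expect_Tsum_nonneg[OF facts_n] by (simp add: \<eta>_def dist_real_def)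
  qed
qed

theorem lemma3p7:
  fixes \<alpha> :: real and as :: "nat \<Rightarrow> real" and w :: "real \<Rightarrow> real"
    and \<tau> :: "nat \<Rightarrow> (nat \<Rightarrow> real) measure"
  assumes "0 < \<alpha>" "\<alpha> < 2"
    and "\<forall>n. 0 < as n \<and> as n < 2"
    and "as \<longlonglongrightarrow> \<alpha>"
    and "\<forall>x\<in>{0..1}. 0 \<le> w x"
    and "(w has_integral 1) {0..1}"
    and "continuous_on {0..<1} w"
    and "\<forall>n\<ge>1. prob_space (\<tau> n)"
    and "\<forall>n\<ge>1. sets (\<tau> n) = sets (PiM {1..n} (\<lambda>_. borel))"
    and "\<forall>n\<ge>1. AE z in \<tau> n. z \<in> simplex1 n"
    and "pre_chaotic w \<tau>"
  shows "((\<lambda>n. expect (\<tau> n) (\<lambda>z. xpt n (as n) z n) / real n) \<longlonglongrightarrow> 0)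
    \<and> (\<forall>\<delta>>0. (\<lambda>n. measure (\<tau> n)
            {z \<in> space (\<tau> n). W1 (mu_emp n (as n) z) (rho n (as n) z) > ereal \<delta>}) \<longlonglongrightarrow> 0)"
proof -
  let ?mean = "\<lambda>n. expect (\<tau> n) (\<lambda>z. xpt n (as n) z n) / real n"
  have eventually_2: "\<forall>\<^sub>F n in sequentially. 2 \<le> n"
    by (rule eventually_ge_at_top)
  have facts_n: "prob_space (\<tau> n)" "sets (\<tau> n) = sets (PiM {1..n} (\<lambda>_. borel))"
    "AE z in \<tau> n. z \<in> simplex1 n" if "2 \<le> n" for n
    using assms(8-10) that by auto
  have "(\<lambda>n. (1 - as n / 2) * expect (\<tau> n) (Tsum n) + as n * (1 / real n))
      \<longlonglongrightarrow> (1 - \<alpha> / 2) * 0 + \<alpha> * 0"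
    by (intro tendsto_intros expect_Tsum_tendsto_0[OF assms(5-11)] lim_1_over_n assms(4)) simp
  then have "(\<lambda>n. (1 - as n / 2) * expect (\<tau> n) (Tsum n) + as n * (1 / real n)) \<longlonglongrightarrow> 0"
    by simp
  then have mean: "?mean \<longlonglongrightarrow> 0"
    by (rule Lim_transform_eventually[OF _ eventually_mono[OF eventually_2]])
       (simp add: expect_xpt_last[OF facts_n])
  have "(\<lambda>n. measure (\<tau> n)
      {z \<in> space (\<tau> n). W1 (mu_emp n (as n) z) (rho n (as n) z) > ereal \<delta>}) \<longlonglongrightarrow> 0"
    if "0 < \<delta>" for \<delta>
  proof (rule tendsto_sandwich[OF _ _ tendsto_const tendsto_divide_zero[OF mean, of \<delta>]])
    show "\<forall>\<^sub>F n in sequentially. measure (\<tau> n)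
        {z \<in> space (\<tau> n). W1 (mu_emp n (as n) z) (rho n (as n) z) > ereal \<delta>} \<le> ?mean n / \<delta>"
      using eventually_2
    proof eventually_elim
      case (elim n)
      show ?case
        using assms(3) elim \<open>0 < \<delta>\<close> by (intro measure_W1_gt_le[OF facts_n]) (auto simp: less_imp_le)
    qed
  qed simp
  with mean show ?thesis by blast
qed

end
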